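(* Let $G$ be a finite simple connected regular graph with at least one edge, which is edge-reconstructable (so that $ern(G)$ is defined), is $2$-swappable, and all of whose edges are removal similar (i.e. $G-e\cong G-f$ for all $e,f\in E(G)$). Then $ern(G)\geq 3$.
   Context: All graphs are finite and simple. For a graph $G$ and $e\in E(G)$, the unlabeled graph $G-e$ is an edge-card of $G$; the edge-deck $\mathcal{ED}(G)$ is the multiset of all edge-cards $G-e$, $e\in E(G)$ (taken up to isomorphism). For a sub-multiset $S\subseteq\mathcal{ED}(G)$, a blocker of $S$ is a graph $H\not\cong G$ such that $S\subseteq\mathcal{ED}(H)$ as multisets. $G$ is reconstructable from $S$ if $S$ has no blocker; $G$ is edge-reconstructable if it is reconstructable from $\mathcal{ED}(G)$. For such $G$, the edge reconstruction number $ern(G)$ is the minimum size of a sub-multiset $S\subseteq\mathcal{ED}(G)$ from which $G$ is reconstructable. For $A\subseteq E(G)$ and $B\subseteq E(\bar G)$, $G-A+B$ denotes the graph on $V(G)$ with edge set $(E(G)\setminus A)\cup B$. $G$ is $2$-swappable if for every $e\in E(G)$ there exist $A\subseteq E(G)$ and $B\subseteq E(\bar G)$ with $e\in A$, $|A|\leq 2$, and $G\cong G-A+B$. *)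

theory Defs
  imports Main "HOL-Library.Multiset"
begin

text \<open>A finite simple graph with vertices from type 'a: a pair (V, E) where V is a finite
  vertex set and E a set of 2-element subsets of V.\<close>

type_synonym 'a graph = "'a set \<times> 'a set set"

definition verts :: "'a graph \<Rightarrow> 'a set" where "verts G = fst G"
definition edges :: "'a graph \<Rightarrow> 'a set set" where "edges G = snd G"

definition simple_graph :: "'a graph \<Rightarrow> bool" where
  "simple_graph G \<longleftrightarrow> finite (verts G) \<and>
     (\<forall>e\<in>edges G. \<exists>x y. x \<in> verts G \<and> y \<in> verts G \<and> x \<noteq> y \<and> e = {x, y})"

definition non_edges :: "'a graph \<Rightarrow> 'a set set" where
  "non_edges G = {{x, y} | x y. x \<in> verts G \<and> y \<in> verts G \<and> x \<noteq> y} - edges G"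

definition graph_iso :: "'a graph \<Rightarrow> 'b graph \<Rightarrow> bool" where
  "graph_iso G H \<longleftrightarrow> (\<exists>f. bij_betw f (verts G) (verts H) \<and>
     (\<forall>x\<in>verts G. \<forall>y\<in>verts G. {x, y} \<in> edges G \<longleftrightarrow> {f x, f y} \<in> edges H))"

text \<open>Isomorphism class (unlabeled graph) among simple graphs on vertex type 'a.\<close>
definition iso_class :: "'a graph \<Rightarrow> 'a graph set" where
  "iso_class G = {H. simple_graph H \<and> graph_iso G H}"

definition edge_delete :: "'a graph \<Rightarrow> 'a set \<Rightarrow> 'a graph" where
  "edge_delete G e = (verts G, edges G - {e})"

definition swap_edges :: "'a graph \<Rightarrow> 'a set set \<Rightarrow> 'a set set \<Rightarrow> 'a graph" where
  "swap_edges G A B = (verts G, (edges G - A) \<union> B)"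

definition edge_deck :: "'a graph \<Rightarrow> 'a graph set multiset" where
  "edge_deck G = image_mset (\<lambda>e. iso_class (edge_delete G e)) (mset_set (edges G))"

definition blocker :: "'a graph \<Rightarrow> 'a graph set multiset \<Rightarrow> 'a graph \<Rightarrow> bool" where
  "blocker G S H \<longleftrightarrow> simple_graph H \<and> \<not> graph_iso H G \<and> S \<subseteq># edge_deck H"

definition reconstructable_from :: "'a graph \<Rightarrow> 'a graph set multiset \<Rightarrow> bool" where
  "reconstructable_from G S \<longleftrightarrow> \<not> (\<exists>H. blocker G S H)"

definition edge_reconstructable :: "'a graph \<Rightarrow> bool" where
  "edge_reconstructable G \<longleftrightarrow> reconstructable_from G (edge_deck G)"

definition ern :: "'a graph \<Rightarrow> nat" where
  "ern G = (LEAST k. \<exists>S. S \<subseteq># edge_deck G \<and> size S = k \<and> reconstructable_from G S)"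

definition connected_graph :: "'a graph \<Rightarrow> bool" where
  "connected_graph G \<longleftrightarrow> (\<forall>x\<in>verts G. \<forall>y\<in>verts G.
     (\<lambda>u v. {u, v} \<in> edges G)\<^sup>*\<^sup>* x y)"

definition regular_graph :: "'a graph \<Rightarrow> bool" where
  "regular_graph G \<longleftrightarrow> (\<exists>k. \<forall>v\<in>verts G. card {u. {u, v} \<in> edges G} = k)"

definition two_swappable :: "'a graph \<Rightarrow> bool" where
  "two_swappable G \<longleftrightarrow> (\<forall>e\<in>edges G. \<exists>A B. A \<subseteq> edges G \<and> B \<subseteq> non_edges G \<and>
     e \<in> A \<and> card A \<le> 2 \<and> graph_iso G (swap_edges G A B))"

definition removal_similar :: "'a graph \<Rightarrow> bool" where
  "removal_similar G \<longleftrightarrow> (\<forall>e\<in>edges G. \<forall>f\<in>edges G.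
     graph_iso (edge_delete G e) (edge_delete G f))"

end

theory Submission
  imports Defs
begin

text \<open>
  Removal similarity makes all edge-cards of \<open>G\<close> one isomorphism class \<open>C\<close>, so every sub-multiset
  of the deck with at most two cards lies in \<open>{#C, C#}\<close>; it suffices to exhibit a graph
  \<open>H \<not>\<cong> G\<close> having two cards in \<open>C\<close>. Since \<open>G\<close> is regular, \<open>G - e + b\<close> is never isomorphic to
  \<open>G\<close> (an end of \<open>e\<close> off \<open>b\<close> loses a degree), so 2-swappability yields
  \<open>G \<cong> G - {e, f} + {b\<^sub>1, b\<^sub>2}\<close>. Then \<open>H = G - e + b\<^sub>1\<close> is not isomorphic to \<open>G\<close>, while
  \<open>H - b\<^sub>1 = G - e\<close> and \<open>H - f = (G - {e, f} + {b\<^sub>1, b\<^sub>2}) - b\<^sub>2\<close> is a card of a copy of \<open>G\<close>.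
\<close>

definition degree :: "'a graph \<Rightarrow> 'a \<Rightarrow> nat" where
  "degree G v = card {u. {u, v} \<in> edges G}"

lemma verts_edge_delete [simp]: "verts (edge_delete G e) = verts G"
  and edges_edge_delete [simp]: "edges (edge_delete G e) = edges G - {e}"
  and verts_swap_edges [simp]: "verts (swap_edges G A B) = verts G"
  and edges_swap_edges [simp]: "edges (swap_edges G A B) = edges G - A \<union> B"
  by (simp_all add: edge_delete_def swap_edges_def verts_def edges_def)

lemma graph_eqI: "verts G = verts H \<Longrightarrow> edges G = edges H \<Longrightarrow> G = H"
  by (simp add: verts_def edges_def prod_eq_iff)

lemma simple_graph_edgeE:
  assumes "simple_graph G" "e \<in> edges G"
  obtains x y where "x \<in> verts G" "y \<in> verts G" "x \<noteq> y" "e = {x, y}"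
  using assms unfolding simple_graph_def by blast

lemma simple_graph_edgeD:
  assumes "simple_graph G" "{u, v} \<in> edges G"
  shows "u \<in> verts G" "v \<in> verts G" "u \<noteq> v"
  using assms by (auto elim!: simple_graph_edgeE simp: doubleton_eq_iff)

lemma finite_verts: "simple_graph G \<Longrightarrow> finite (verts G)"
  by (simp add: simple_graph_def)

lemma finite_edges:
  assumes "simple_graph G"
  shows "finite (edges G)"
proof -
  have "edges G \<subseteq> Pow (verts G)"
    using assms by (auto elim: simple_graph_edgeE)
  then show ?thesis
    using finite_verts[OF assms] by (meson finite_Pow_iff finite_subset)
qed

lemma finite_non_edges:
  assumes "simple_graph G"
  shows "finite (non_edges G)"
proof -
  have "non_edges G \<subseteq> Pow (verts G)"
    unfolding non_edges_def by auto
  then show ?thesis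
    using finite_verts[OF assms] by (meson finite_Pow_iff finite_subset)
qed

lemma finite_neighbours: "simple_graph G \<Longrightarrow> finite {u. {u, v} \<in> edges G}"
  by (rule finite_subset[of _ "verts G"]) (auto dest: simple_graph_edgeD simp: finite_verts)

lemma simple_graph_swap_edges:
  assumes "simple_graph G" "B \<subseteq> non_edges G"
  shows "simple_graph (swap_edges G A B)"
proof -
  have "\<exists>x y. x \<in> verts G \<and> y \<in> verts G \<and> x \<noteq> y \<and> e = {x, y}" if "e \<in> B" for e
    using that assms(2) unfolding non_edges_def by blast
  then show ?thesis
    using assms(1) unfolding simple_graph_def by auto
qed

lemma graph_iso_trans:
  assumes "graph_iso G H" "graph_iso H K"
  shows "graph_iso G K"
proof -
  obtain f where f: "bij_betw f (verts G) (verts H)"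
    "\<forall>x\<in>verts G. \<forall>y\<in>verts G. {x, y} \<in> edges G \<longleftrightarrow> {f x, f y} \<in> edges H"
    using assms(1) unfolding graph_iso_def by blast
  obtain g where g: "bij_betw g (verts H) (verts K)"
    "\<forall>x\<in>verts H. \<forall>y\<in>verts H. {x, y} \<in> edges H \<longleftrightarrow> {g x, g y} \<in> edges K"
    using assms(2) unfolding graph_iso_def by blast
  have "bij_betw (g \<circ> f) (verts G) (verts K)"
    using f(1) g(1) by (rule bij_betw_trans)
  moreover have "\<forall>x\<in>verts G. \<forall>y\<in>verts G. {x, y} \<in> edges G \<longleftrightarrow> {(g \<circ> f) x, (g \<circ> f) y} \<in> edges K"
    using f g bij_betwE[OF f(1)] by auto
  ultimately show ?thesis
    unfolding graph_iso_def by blast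
qed

lemma graph_iso_sym:
  assumes "graph_iso G H"
  shows "graph_iso H G"
proof -
  obtain f where f: "bij_betw f (verts G) (verts H)"
    "\<forall>x\<in>verts G. \<forall>y\<in>verts G. {x, y} \<in> edges G \<longleftrightarrow> {f x, f y} \<in> edges H"
    using assms unfolding graph_iso_def by blast
  define g where "g = inv_into (verts G) f"
  have g: "bij_betw g (verts H) (verts G)"
    unfolding g_def using f(1) by (rule bij_betw_inv_into)
  have "{x, y} \<in> edges H \<longleftrightarrow> {g x, g y} \<in> edges G" if "x \<in> verts H" "y \<in> verts H" for x y
  proof -
    have "g x \<in> verts G" "g y \<in> verts G" "f (g x) = x" "f (g y) = y"
      using that g f(1) bij_betwE bij_betw_inv_into_right unfolding g_def by fastforce+
    then show ?thesis
      using f(2) by metis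
  qed
  then show ?thesis
    using g unfolding graph_iso_def by blast
qed

lemma iso_class_eq: "graph_iso G H \<Longrightarrow> iso_class G = iso_class H"
  unfolding iso_class_def using graph_iso_trans graph_iso_sym by blast

lemma graph_iso_edges_image:
  assumes "simple_graph G" "simple_graph K"
    and f: "bij_betw f (verts G) (verts K)"
      "\<forall>x\<in>verts G. \<forall>y\<in>verts G. {x, y} \<in> edges G \<longleftrightarrow> {f x, f y} \<in> edges K"
  shows "edges K = (`) f ` edges G"
proof
  show "(`) f ` edges G \<subseteq> edges K"
  proof
    fix e' assume "e' \<in> (`) f ` edges G"
    then obtain e where e: "e \<in> edges G" "e' = f ` e"
      by blast
    obtain x y where "x \<in> verts G" "y \<in> verts G" "e = {x, y}"
      using simple_graph_edgeE[OF assms(1) e(1)] by blast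
    then show "e' \<in> edges K"
      using f(2) e by auto
  qed
next
  show "edges K \<subseteq> (`) f ` edges G"
  proof
    fix e' assume e': "e' \<in> edges K"
    obtain x' y' where "x' \<in> verts K" "y' \<in> verts K" and e'_eq: "e' = {x', y'}"
      using simple_graph_edgeE[OF assms(2) e'] by blast
    moreover note bij_betw_imp_surj_on[OF f(1), symmetric]
    ultimately obtain x y where "x \<in> verts G" "y \<in> verts G" "x' = f x" "y' = f y"
      by (metis imageE)
    with e'_eq have xy: "x \<in> verts G" "y \<in> verts G" "e' = {f x, f y}"
      by simp_all
    then have "{x, y} \<in> edges G"
      using e' f(2) by blast
    then show "e' \<in> (`) f ` edges G"
      using xy(3) by (intro image_eqI[where x = "{x, y}"]) auto
  qed
qed

lemma graph_iso_card_edges: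
  assumes "simple_graph G" "simple_graph K" "graph_iso G K"
  shows "card (edges K) = card (edges G)"
proof -
  obtain f where f: "bij_betw f (verts G) (verts K)"
    "\<forall>x\<in>verts G. \<forall>y\<in>verts G. {x, y} \<in> edges G \<longleftrightarrow> {f x, f y} \<in> edges K"
    using assms(3) unfolding graph_iso_def by blast
  have "inj_on ((`) f) (edges G)"
  proof (rule inj_onI)
    fix a b assume "a \<in> edges G" "b \<in> edges G" "f ` a = f ` b"
    moreover have "a \<subseteq> verts G" "b \<subseteq> verts G"
      using assms(1) \<open>a \<in> edges G\<close> \<open>b \<in> edges G\<close> by (auto elim: simple_graph_edgeE)
    ultimately show "a = b"
      using inj_on_image_eq_iff[OF bij_betw_imp_inj_on[OF f(1)]] by blast
  qed
  then show ?thesis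
    using graph_iso_edges_image[OF assms(1,2) f] by (simp add: card_image)
qed

lemma graph_iso_degree:
  assumes "simple_graph K"
    and f: "bij_betw f (verts K) (verts G)"
      "\<forall>x\<in>verts K. \<forall>y\<in>verts K. {x, y} \<in> edges K \<longleftrightarrow> {f x, f y} \<in> edges G"
    and "simple_graph G" "v \<in> verts K"
  shows "degree G (f v) = degree K v"
proof -
  have nbrs: "{u. {u, v} \<in> edges K} \<subseteq> verts K"
    using assms(1) by (auto dest: simple_graph_edgeD)
  have "f ` {u. {u, v} \<in> edges K} = {w. {w, f v} \<in> edges G}"
  proof (intro equalityI subsetI)
    fix w assume "w \<in> f ` {u. {u, v} \<in> edges K}"
    then show "w \<in> {w. {w, f v} \<in> edges G}"
      using nbrs f(2) assms(5) by blast
  next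
    fix w assume w: "w \<in> {w. {w, f v} \<in> edges G}"
    then obtain u where "u \<in> verts K" "w = f u"
      using assms(4) bij_betw_imp_surj_on[OF f(1)] by (auto dest: simple_graph_edgeD)
    then show "w \<in> f ` {u. {u, v} \<in> edges K}"
      using w f(2) assms(5) by blast
  qed
  moreover have "inj_on f {u. {u, v} \<in> edges K}"
    using bij_betw_imp_inj_on[OF f(1)] nbrs by (rule inj_on_subset)
  ultimately show ?thesis
    unfolding degree_def by (metis card_image)
qed

lemma graph_iso_edge_delete:
  assumes "simple_graph G" "simple_graph K" "graph_iso G K" "b \<in> edges K"
  obtains g where "g \<in> edges G" "graph_iso (edge_delete G g) (edge_delete K b)"
proof -
  obtain f where f: "bij_betw f (verts G) (verts K)"
    "\<forall>x\<in>verts G. \<forall>y\<in>verts G. {x, y} \<in> edges G \<longleftrightarrow> {f x, f y} \<in> edges K"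
    using assms(3) unfolding graph_iso_def by blast
  have inj: "inj_on ((`) f) (Pow (verts G))"
    using bij_betw_imp_inj_on[OF f(1)] inj_on_image_Pow by blast
  obtain g where g: "g \<in> edges G" "b = f ` g"
    using assms(4) graph_iso_edges_image[OF assms(1,2) f] by blast
  have "g \<subseteq> verts G"
    using assms(1) g(1) by (auto elim: simple_graph_edgeE)
  then have "{x, y} \<noteq> g \<longleftrightarrow> {f x, f y} \<noteq> b" if "x \<in> verts G" "y \<in> verts G" for x y
    using inj_onD[OF inj, of "{x, y}" g] that g(2) by auto
  then have "graph_iso (edge_delete G g) (edge_delete K b)"
    unfolding graph_iso_def using f by auto
  with g(1) show thesis
    by (rule that)
qed

lemma regular_graph_swap_edge_not_iso:
  assumes "simple_graph G" "regular_graph G"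
    and e: "e \<in> edges G" and b: "b \<in> non_edges G"
  shows "\<not> graph_iso (swap_edges G {e} {b}) G"
proof
  let ?H = "swap_edges G {e} {b}"
  obtain k where reg: "\<forall>v\<in>verts G. degree G v = k"
    using assms(2) unfolding regular_graph_def degree_def by blast
  assume "graph_iso ?H G"
  then obtain f where f: "bij_betw f (verts ?H) (verts G)"
    "\<forall>x\<in>verts ?H. \<forall>y\<in>verts ?H. {x, y} \<in> edges ?H \<longleftrightarrow> {f x, f y} \<in> edges G"
    unfolding graph_iso_def by blast
  have "b \<noteq> e" "card b = 2"
    using b e unfolding non_edges_def by auto
  then obtain v w where vw: "v \<in> verts G" "v \<notin> b" "e = {v, w}" "v \<noteq> w"
    using assms(1) e by (elim simple_graph_edgeE) (auto simp: insert_commute card_2_iff)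
  have "{u. {u, v} \<in> edges ?H} = {u. {u, v} \<in> edges G} - {w}"
    using vw by (auto simp: doubleton_eq_iff)
  moreover have w: "w \<in> {u. {u, v} \<in> edges G}"
    using e vw by (simp add: insert_commute)
  ultimately have "degree ?H v = k - 1"
    using reg vw(1) finite_neighbours[OF assms(1)] unfolding degree_def by simp
  moreover have "degree G (f v) = degree ?H v"
    using graph_iso_degree[OF simple_graph_swap_edges f] assms(1) b vw(1) by simp
  moreover have "degree G (f v) = k" "degree G v = k"
    using reg f(1) vw(1) by (simp_all add: bij_betwE)
  moreover have "degree G v > 0"
    using w finite_neighbours[OF assms(1)] unfolding degree_def by (auto simp: card_gt_0_iff)
  ultimately show False
    by simp
qed

lemma card_swap_edges_eq:
  assumes "simple_graph G" "A \<subseteq> edges G" "B \<subseteq> non_edges G" "graph_iso G (swap_edges G A B)"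
  shows "card B = card A"
proof -
  have fin: "finite A" "finite B" "finite (edges G)"
    using assms(1-3) finite_edges finite_non_edges finite_subset by blast+
  have "B \<inter> (edges G - A) = {}"
    using assms(3) unfolding non_edges_def by auto
  then have "card (edges (swap_edges G A B)) = card (edges G) - card A + card B"
    using fin assms(2) by (simp add: card_Un_disjoint card_Diff_subset Un_commute)
  moreover have "card (edges (swap_edges G A B)) = card (edges G)"
    using graph_iso_card_edges simple_graph_swap_edges assms(1,3,4) by blast
  moreover have "card A \<le> card (edges G)"
    using fin assms(2) by (simp add: card_mono)
  ultimately show ?thesis
    by linarith
qed

lemma two_swappable_regularE:
  assumes "simple_graph G" "regular_graph G" "two_swappable G" "e \<in> edges G"
  obtains f b\<^sub>1 b\<^sub>2 where "f \<in> edges G" "f \<noteq> e" "b\<^sub>1 \<in> non_edges G" "b\<^sub>2 \<in> non_edges G"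
    "b\<^sub>1 \<noteq> b\<^sub>2" "graph_iso G (swap_edges G {e, f} {b\<^sub>1, b\<^sub>2})"
proof -
  obtain A B where AB: "A \<subseteq> edges G" "B \<subseteq> non_edges G" "e \<in> A" "card A \<le> 2"
    "graph_iso G (swap_edges G A B)"
    using assms(3,4) unfolding two_swappable_def by (elim ballE exE conjE) auto
  have "finite A"
    using AB(1) finite_edges[OF assms(1)] finite_subset by blast
  then have "card A \<noteq> 0"
    using AB(3) by auto
  have cardB: "card B = card A"
    using card_swap_edges_eq[OF assms(1) AB(1,2,5)] .
  have "card A \<noteq> 1"
  proof
    assume "card A = 1"
    then obtain a where "A = {a}"
      by (rule card_1_singletonE)
    with AB(3) have "A = {e}"
      by simp
    from \<open>card A = 1\<close> cardB obtain b where "B = {b}"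
      by (metis card_1_singletonE)
    with \<open>A = {e}\<close> AB(2,5) have "graph_iso (swap_edges G {e} {b}) G" "b \<in> non_edges G"
      by (auto intro: graph_iso_sym)
    then show False
      using regular_graph_swap_edge_not_iso[OF assms(1,2,4)] by blast
  qed
  with \<open>card A \<noteq> 0\<close> AB(4) cardB have "card A = 2" "card B = 2"
    by linarith+
  then have "card (A - {e}) = 1"
    using AB(3) \<open>finite A\<close> by simp
  then obtain f where "A - {e} = {f}"
    by (rule card_1_singletonE)
  then have A: "A = {e, f}" "f \<noteq> e"
    using AB(3) by auto
  obtain b\<^sub>1 b\<^sub>2 where B: "B = {b\<^sub>1, b\<^sub>2}" "b\<^sub>1 \<noteq> b\<^sub>2"
    using \<open>card B = 2\<close> unfolding card_2_iff by blast
  show thesis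
    using AB(1,2,5) A B by (intro that) auto
qed

lemma edge_deck_two_cards:
  assumes "simple_graph H" "a \<in> edges H" "b \<in> edges H" "a \<noteq> b"
  shows "{#iso_class (edge_delete H a), iso_class (edge_delete H b)#} \<subseteq># edge_deck H"
proof -
  have "mset_set {a, b} + mset_set (edges H - {a, b}) = mset_set ({a, b} \<union> (edges H - {a, b}))"
    using finite_edges[OF assms(1)] by (intro mset_set_Union[symmetric]) auto
  also have "{a, b} \<union> (edges H - {a, b}) = edges H"
    using assms(2,3) by blast
  finally have "mset_set (edges H) = {#a, b#} + mset_set (edges H - {a, b})"
    using assms(4) by simp
  then show ?thesis
    unfolding edge_deck_def by simp
qed

lemma removal_similar_iso_class:
  assumes "removal_similar G" "e \<in> edges G" "f \<in> edges G"
  shows "iso_class (edge_delete G e) = iso_class (edge_delete G f)"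
proof (rule iso_class_eq)
  show "graph_iso (edge_delete G e) (edge_delete G f)"
    using assms unfolding removal_similar_def by blast
qed

lemma removal_similar_edge_deck:
  assumes "simple_graph G" "removal_similar G" "e \<in> edges G"
  shows "edge_deck G = replicate_mset (card (edges G)) (iso_class (edge_delete G e))"
proof -
  have "edge_deck G = image_mset (\<lambda>_. iso_class (edge_delete G e)) (mset_set (edges G))"
    unfolding edge_deck_def using finite_edges[OF assms(1)] removal_similar_iso_class[OF assms(2) _ assms(3)]
    by (intro image_mset_cong) auto
  then show ?thesis
    by (simp add: image_mset_const_eq)
qed

lemma ern_geI:
  assumes "edge_reconstructable G"
    and "\<And>S. S \<subseteq># edge_deck G \<Longrightarrow> size S < n \<Longrightarrow> \<exists>H. blocker G S H"
  shows "n \<le> ern G"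
proof -
  let ?P = "\<lambda>k. \<exists>S. S \<subseteq># edge_deck G \<and> size S = k \<and> reconstructable_from G S"
  have "?P (size (edge_deck G))"
    using assms(1) unfolding edge_reconstructable_def by blast
  then have "?P (ern G)"
    unfolding ern_def by (rule LeastI)
  then obtain S where S: "S \<subseteq># edge_deck G" "size S = ern G" "\<not> (\<exists>H. blocker G S H)"
    unfolding reconstructable_from_def by blast
  show ?thesis
  proof (rule ccontr)
    assume "\<not> n \<le> ern G"
    with S show False
      using assms(2)[of S] by simp
  qed
qed

lemma two_swappable_blocker:
  assumes "simple_graph G" "regular_graph G" "two_swappable G" "removal_similar G"
    and "e \<in> edges G"
  obtains H where "simple_graph H" "\<not> graph_iso H G"
    "replicate_mset 2 (iso_class (edge_delete G e)) \<subseteq># edge_deck H"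
proof -
  let ?C = "iso_class (edge_delete G e)"
  obtain f b\<^sub>1 b\<^sub>2 where fb: "f \<in> edges G" "f \<noteq> e" "b\<^sub>1 \<in> non_edges G" "b\<^sub>2 \<in> non_edges G"
    "b\<^sub>1 \<noteq> b\<^sub>2" and iso: "graph_iso G (swap_edges G {e, f} {b\<^sub>1, b\<^sub>2})"
    using two_swappable_regularE[OF assms(1-3,5)] by blast
  let ?H = "swap_edges G {e} {b\<^sub>1}"
  let ?K = "swap_edges G {e, f} {b\<^sub>1, b\<^sub>2}"
  have nonedge: "b\<^sub>1 \<notin> edges G" "b\<^sub>2 \<notin> edges G"
    using fb(3,4) unfolding non_edges_def by auto
  have simple: "simple_graph ?H" "simple_graph ?K"
    using fb(3,4) by (auto intro: simple_graph_swap_edges[OF assms(1)])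
  have "edge_delete ?H b\<^sub>1 = edge_delete G e"
    using nonedge by (intro graph_eqI) auto
  moreover have "iso_class (edge_delete ?H f) = ?C"
  proof -
    obtain g where g: "g \<in> edges G" "graph_iso (edge_delete G g) (edge_delete ?K b\<^sub>2)"
      using graph_iso_edge_delete[OF assms(1) simple(2) iso] by auto
    have "edge_delete ?H f = edge_delete ?K b\<^sub>2"
      using nonedge fb(1,2,5) by (intro graph_eqI) auto
    also have "iso_class \<dots> = iso_class (edge_delete G g)"
      using iso_class_eq[OF g(2)] by simp
    finally show ?thesis
      using removal_similar_iso_class[OF assms(4) g(1) assms(5)] by simp
  qed
  moreover have "{#iso_class (edge_delete ?H b\<^sub>1), iso_class (edge_delete ?H f)#} \<subseteq># edge_deck ?H"
    using edge_deck_two_cards[OF simple(1)] fb nonedge by auto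
  ultimately have "replicate_mset 2 ?C \<subseteq># edge_deck ?H"
    by (simp add: numeral_2_eq_2)
  with simple(1) regular_graph_swap_edge_not_iso[OF assms(1,2,5) fb(3)] show thesis
    by (rule that)
qed

theorem mainTheorem2:
  fixes G :: "'a graph"
  assumes "simple_graph G"
    and "connected_graph G"
    and "regular_graph G"
    and "edges G \<noteq> {}"
    and "edge_reconstructable G"
    and "two_swappable G"
    and "removal_similar G"
  shows "ern G \<ge> 3"
proof (rule ern_geI[OF assms(5)])
  fix S assume S: "S \<subseteq># edge_deck G" "size S < 3"
  obtain e where e: "e \<in> edges G"
    using assms(4) by blast
  let ?C = "iso_class (edge_delete G e)"
  obtain H where H: "simple_graph H" "\<not> graph_iso H G" "replicate_mset 2 ?C \<subseteq># edge_deck H"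
    using two_swappable_blocker[OF assms(1,3,6,7) e] .
  have "set_mset (edge_deck G) \<subseteq> {?C}"
    unfolding removal_similar_edge_deck[OF assms(1,7) e] by simp
  then have "S = replicate_mset (size S) ?C"
    using set_mset_mono[OF S(1)] by (intro set_mset_subset_singletonD) blast
  moreover have "size S \<le> 2"
    using S(2) by simp
  ultimately have "S \<subseteq># replicate_mset 2 ?C"
    by (metis replicate_mset_msubseteq_iff)
  then show "\<exists>H. blocker G S H"
    using H unfolding blocker_def by (meson subset_mset.order_trans)
qed

end
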